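(* Let $\mathfrak{g}$ be a finite-dimensional Lie algebra over a field $K$ of characteristic zero with trivial center. Then every weakly inner CPA-structure on $\mathfrak{g}$ is inner.
   Context: A CPA-structure on $\mathfrak{g}$ is a bilinear product $x\cdot y$ satisfying, for all $x,y,z$: $x\cdot y=y\cdot x$; $[x,y]\cdot z=x\cdot(y\cdot z)-y\cdot(x\cdot z)$; $x\cdot[y,z]=[x\cdot y,z]+[y,x\cdot z]$. It is weakly inner if there is a linear map $\phi\in\mathrm{End}(V)$ of the underlying vector space with $x\cdot y=[\phi(x),y]$ for all $x,y$; it is inner if moreover $\phi$ can be taken to be a Lie algebra homomorphism $\mathfrak{g}\to\mathfrak{g}$. *)

theory Defs
  imports Complex_Main
begin

definition lie_algebra ::
  "('k::field \<Rightarrow> 'v::ab_group_add \<Rightarrow> 'v) \<Rightarrow> ('v \<Rightarrow> 'v \<Rightarrow> 'v) \<Rightarrow> bool" where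
  "lie_algebra scale br \<longleftrightarrow>
     vector_space scale \<and>
     (\<forall>x. Vector_Spaces.linear scale scale (br x)) \<and>
     (\<forall>y. Vector_Spaces.linear scale scale (\<lambda>x. br x y)) \<and>
     (\<forall>x. br x x = 0) \<and>
     (\<forall>x y z. br x (br y z) + br y (br z x) + br z (br x y) = 0)"

definition finite_dim :: "('k::field \<Rightarrow> 'v::ab_group_add \<Rightarrow> 'v) \<Rightarrow> bool" where
  "finite_dim scale \<longleftrightarrow> (\<exists>B. finite B \<and> module.span scale B = UNIV)"

definition trivial_center :: "('v::ab_group_add \<Rightarrow> 'v \<Rightarrow> 'v) \<Rightarrow> bool" where
  "trivial_center br \<longleftrightarrow> (\<forall>z. (\<forall>x. br z x = 0) \<longrightarrow> z = 0)"

definition cpa_structure ::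
  "('k::field \<Rightarrow> 'v::ab_group_add \<Rightarrow> 'v) \<Rightarrow> ('v \<Rightarrow> 'v \<Rightarrow> 'v) \<Rightarrow> ('v \<Rightarrow> 'v \<Rightarrow> 'v) \<Rightarrow> bool" where
  "cpa_structure scale br p \<longleftrightarrow>
     (\<forall>x. Vector_Spaces.linear scale scale (p x)) \<and>
     (\<forall>y. Vector_Spaces.linear scale scale (\<lambda>x. p x y)) \<and>
     (\<forall>x y. p x y = p y x) \<and>
     (\<forall>x y z. p (br x y) z = p x (p y z) - p y (p x z)) \<and>
     (\<forall>x y z. p x (br y z) = br (p x y) z + br y (p x z))"

definition weakly_inner ::
  "('k::field \<Rightarrow> 'v::ab_group_add \<Rightarrow> 'v) \<Rightarrow> ('v \<Rightarrow> 'v \<Rightarrow> 'v) \<Rightarrow> ('v \<Rightarrow> 'v \<Rightarrow> 'v) \<Rightarrow> bool" where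
  "weakly_inner scale br p \<longleftrightarrow>
     (\<exists>\<phi>. Vector_Spaces.linear scale scale \<phi> \<and> (\<forall>x y. p x y = br (\<phi> x) y))"

definition inner_cpa ::
  "('k::field \<Rightarrow> 'v::ab_group_add \<Rightarrow> 'v) \<Rightarrow> ('v \<Rightarrow> 'v \<Rightarrow> 'v) \<Rightarrow> ('v \<Rightarrow> 'v \<Rightarrow> 'v) \<Rightarrow> bool" where
  "inner_cpa scale br p \<longleftrightarrow>
     (\<exists>\<phi>. Vector_Spaces.linear scale scale \<phi> \<and>
          (\<forall>x y. \<phi> (br x y) = br (\<phi> x) (\<phi> y)) \<and>
          (\<forall>x y. p x y = br (\<phi> x) y))"

end

theory Submission
  imports Defs
begin

text \<open>If \<open>x \<cdot> y = [\<phi> x, y]\<close>, the first CPA identity together with the Jacobi identity says that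
  \<open>ad (\<phi> [x, y])\<close> and \<open>ad [\<phi> x, \<phi> y]\<close> agree. Since the centre is trivial, \<open>ad\<close> is injective,
  so \<open>\<phi>\<close> is a Lie algebra homomorphism.\<close>

lemma lie_algebra_bracket_add_left:
  assumes "lie_algebra scale br"
  shows "br (u + v) y = br u y + br v y"
proof -
  have "Vector_Spaces.linear scale scale (\<lambda>x. br x y)"
    using assms unfolding lie_algebra_def by blast
  from module_hom.add[OF this[unfolded linear_iff_module_hom]] show ?thesis
    by simp
qed

lemma lie_algebra_bracket_diff_left:
  assumes "lie_algebra scale br"
  shows "br (u - v) y = br u y - br v y"
proof -
  have "Vector_Spaces.linear scale scale (\<lambda>x. br x y)"
    using assms unfolding lie_algebra_def by blast
  from module_hom.diff[OF this[unfolded linear_iff_module_hom]] show ?thesis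
    by simp
qed

lemma lie_algebra_antisym:
  assumes "lie_algebra scale br"
  shows "br x y = - br y x"
proof -
  have lin_right: "Vector_Spaces.linear scale scale (br x)"
    and alt: "br x x = 0" for x
    using assms unfolding lie_algebra_def by blast+
  have "br (x + y) (x + y) = br x x + br x y + (br y x + br y y)"
    using module_hom.add[OF lin_right[unfolded linear_iff_module_hom]]
    by (simp add: lie_algebra_bracket_add_left[OF assms])
  then have "br x y + br y x = 0"
    by (simp add: alt)
  then show ?thesis
    by (simp add: eq_neg_iff_add_eq_0)
qed

lemma lie_algebra_bracket_ad:
  assumes "lie_algebra scale br"
  shows "br (br a b) z = br a (br b z) - br b (br a z)"
proof -
  have lin_right: "Vector_Spaces.linear scale scale (br b)"
    and jacobi: "br a (br b z) + br b (br z a) + br z (br a b) = 0"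
    using assms unfolding lie_algebra_def by blast+
  have "br b (br z a) = - br b (br a z)"
    using lie_algebra_antisym[OF assms, of z a] module_hom.neg[OF lin_right[unfolded linear_iff_module_hom]]
    by simp
  moreover have "br z (br a b) = - br (br a b) z"
    by (rule lie_algebra_antisym[OF assms])
  ultimately show ?thesis
    using jacobi by (simp add: algebra_simps)
qed

lemma ad_injective_if_trivial_center:
  assumes "lie_algebra scale br" and "trivial_center br"
    and "\<And>z. br u z = br v z"
  shows "u = v"
proof -
  have "\<forall>z. br (u - v) z = 0"
    using assms(3) by (simp add: lie_algebra_bracket_diff_left[OF assms(1)])
  then show ?thesis
    using assms(2) unfolding trivial_center_def by auto
qed

lemma bracket_hom_if_weakly_inner_product:
  assumes "lie_algebra scale br" and "trivial_center br"
    and cpa: "\<And>x y z. p (br x y) z = p x (p y z) - p y (p x z)"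
    and weakly_inner: "\<And>x y. p x y = br (\<phi> x) y"
  shows "\<phi> (br x y) = br (\<phi> x) (\<phi> y)"
proof (rule ad_injective_if_trivial_center[OF assms(1,2)])
  fix z
  show "br (\<phi> (br x y)) z = br (br (\<phi> x) (\<phi> y)) z"
    using cpa[of x y z] by (simp add: weakly_inner lie_algebra_bracket_ad[OF assms(1)])
qed

theorem lemma2p8:
  fixes scale :: "'k::field_char_0 \<Rightarrow> 'v::ab_group_add \<Rightarrow> 'v"
    and br p :: "'v \<Rightarrow> 'v \<Rightarrow> 'v"
  assumes "lie_algebra scale br"
    and "finite_dim scale"
    and "trivial_center br"
    and "cpa_structure scale br p"
    and "weakly_inner scale br p"
  shows "inner_cpa scale br p"
proof -
  obtain \<phi> where lin: "Vector_Spaces.linear scale scale \<phi>"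
    and product: "\<forall>x y. p x y = br (\<phi> x) y"
    using assms(5) unfolding weakly_inner_def by blast
  have cpa: "p (br x y) z = p x (p y z) - p y (p x z)" for x y z
    using assms(4) unfolding cpa_structure_def by blast
  have "\<phi> (br x y) = br (\<phi> x) (\<phi> y)" for x y
    using bracket_hom_if_weakly_inner_product[OF assms(1,3) cpa] product by blast
  then show ?thesis
    unfolding inner_cpa_def using lin product by blast
qed

end
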